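(* Let $R$ be a compact Hausdorff topological semiring. If $\theta$ is an equivalence relation on $R$ that is open in $R\times R$, then there exists a congruence $\theta_0$ on $R$ that is open in $R\times R$ and satisfies $\theta_0\subseteq\theta$.
   Context: A semiring is an algebra $(R,+,\cdot,0)$ such that $(R,+,0)$ is a commutative monoid, $(R,\cdot)$ is a semigroup (no multiplicative identity is required), multiplication distributes over addition on both sides, and $0\cdot x = x\cdot 0 = 0$ for all $x\in R$. A topological semiring is a semiring with a topology in which addition and multiplication are continuous. A congruence on $R$ is an equivalence relation on $R$ that is a congruence for both the additive monoid and the multiplicative semigroup (equivalently, a subsemiring of $R\times R$). *)

theory Defs
  imports "HOL-Analysis.Analysis"
begin

definition semiring_congruence :: "('a::semiring_0 \<times> 'a) set \<Rightarrow> bool" where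
  "semiring_congruence \<theta> \<longleftrightarrow> equiv UNIV \<theta> \<and>
     (\<forall>a b c d. (a, b) \<in> \<theta> \<longrightarrow> (c, d) \<in> \<theta> \<longrightarrow>
        (a + c, b + d) \<in> \<theta> \<and> (a * c, b * d) \<in> \<theta>)"

end

theory Submission
  imports Defs
begin

text \<open>Identify a and b when c a \<theta> c b for every unary polynomial c x = s + u x v. This
  relation is an equivalence because \<theta> is one, it is a congruence because unary polynomials
  are closed under precomposition with translations and multiplications, and it lies in \<theta>
  because the identity is a unary polynomial. It is open by the tube lemma: the polynomials
  depend continuously on parameters ranging over a compact space, and \<theta> is open.\<close>

lemma open_Collect_all_compact:
  fixes F :: "'q::topological_space \<times> 'p::topological_space \<Rightarrow> 'r::topological_space"
  assumes "compact (UNIV :: 'p set)" and "continuous_on UNIV F" and "open S"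
  shows "open {q. \<forall>p. F (q, p) \<in> S}"
proof (subst open_subopen, intro ballI)
  fix q assume q: "q \<in> {q. \<forall>p. F (q, p) \<in> S}"
  have open_vimage: "open (UNIV \<inter> F -` S)"
    using continuous_on_open_vimage[OF open_UNIV, of F] assms(2,3) by simp
  have "{q} \<times> UNIV \<subseteq> UNIV \<inter> F -` S" using q by auto
  from Elementary_Topology.tube_lemma[OF assms(1) open_vimage this]
  obtain U where "q \<in> U" "open U" "U \<times> UNIV \<subseteq> UNIV \<inter> F -` S"
    by blast
  then show "\<exists>T. open T \<and> q \<in> T \<and> T \<subseteq> {q. \<forall>p. F (q, p) \<in> S}" by blast
qed

lemma continuous_on_binop_compose:
  assumes "continuous_on UNIV (\<lambda>p::'a::topological_space \<times> 'a. h (fst p) (snd p))"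
    and "continuous_on UNIV f" and "continuous_on UNIV g"
  shows "continuous_on UNIV (\<lambda>x. h (f x) (g x))"
  using continuous_on_compose2[OF assms(1) continuous_on_Pair[OF assms(2,3)]] by simp

definition context_kernel :: "('b \<Rightarrow> 'a) set \<Rightarrow> ('a \<times> 'a) set \<Rightarrow> ('b \<times> 'b) set" where
  "context_kernel C \<theta> = {(a, b). \<forall>c\<in>C. (c a, c b) \<in> \<theta>}"

lemma equiv_context_kernel:
  assumes "equiv UNIV \<theta>"
  shows "equiv UNIV (context_kernel C \<theta>)"
proof (rule equivI)
  show "context_kernel C \<theta> \<subseteq> UNIV \<times> UNIV" by simp
  from assms have "refl \<theta>" "sym \<theta>" "trans \<theta>" by (auto elim: equivE)
  show "refl (context_kernel C \<theta>)"
    using \<open>refl \<theta>\<close> unfolding context_kernel_def refl_on_def by auto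
  show "sym (context_kernel C \<theta>)"
    using \<open>sym \<theta>\<close> unfolding context_kernel_def by (auto intro!: symI dest: symD)
  show "trans (context_kernel C \<theta>)"
    using \<open>trans \<theta>\<close> unfolding context_kernel_def by (auto intro!: transI dest: transD)
qed

lemma context_kernel_compatible:
  assumes "\<And>c. c \<in> C \<Longrightarrow> c \<circ> f \<in> C" and "(a, b) \<in> context_kernel C \<theta>"
  shows "(f a, f b) \<in> context_kernel C \<theta>"
  using assms unfolding context_kernel_def by force

lemma context_kernel_subset: "id \<in> C \<Longrightarrow> context_kernel C \<theta> \<subseteq> \<theta>"
  unfolding context_kernel_def by auto

text \<open>A unary polynomial x \<mapsto> s + u x v of a semiring; the factors u and v are optional
  because there need not be a unit.\<close>

fun left_mult_opt :: "'a::times option \<Rightarrow> 'a \<Rightarrow> 'a" where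
  "left_mult_opt None x = x"
| "left_mult_opt (Some u) x = u * x"

fun right_mult_opt :: "'a::times option \<Rightarrow> 'a \<Rightarrow> 'a" where
  "right_mult_opt None x = x"
| "right_mult_opt (Some v) x = x * v"

definition semiring_context :: "'a::semiring_0 \<times> 'a option \<times> 'a option \<Rightarrow> 'a \<Rightarrow> 'a" where
  "semiring_context = (\<lambda>(s, u, v) x. s + left_mult_opt u (right_mult_opt v x))"

lemma left_mult_opt_add:
  "left_mult_opt u (x + y) = left_mult_opt u x + left_mult_opt u (y::'a::semiring_0)"
  by (cases u) (simp_all add: distrib_left)

lemma right_mult_opt_add:
  "right_mult_opt v (x + y) = right_mult_opt v x + right_mult_opt v (y::'a::semiring_0)"
  by (cases v) (simp_all add: distrib_right)

lemma left_mult_opt_mult: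
  "left_mult_opt u (e * x) = left_mult_opt u e * (x::'a::semigroup_mult)"
  by (cases u) (simp_all add: mult.assoc)

lemma right_mult_opt_mult:
  "right_mult_opt v (x * e) = x * right_mult_opt v (e::'a::semigroup_mult)"
  by (cases v) (simp_all add: mult.assoc)

lemma right_mult_opt_mult_left:
  "right_mult_opt v (e * x) = e * right_mult_opt v (x::'a::semigroup_mult)"
  by (cases v) (simp_all add: mult.assoc)

lemma semiring_context_comp_add_right:
  "semiring_context (s, u, v) \<circ> (\<lambda>x. x + e) =
     semiring_context (s + left_mult_opt u (right_mult_opt v e), u, v)"
  by (simp add: fun_eq_iff semiring_context_def left_mult_opt_add right_mult_opt_add add_ac)

lemma semiring_context_comp_mult_right:
  "semiring_context (s, u, v) \<circ> (\<lambda>x. x * e) = semiring_context (s, u, Some (right_mult_opt v e))"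
  by (simp add: fun_eq_iff semiring_context_def right_mult_opt_mult)

lemma semiring_context_comp_mult_left:
  "semiring_context (s, u, v) \<circ> (\<lambda>x. e * x) = semiring_context (s, Some (left_mult_opt u e), v)"
  by (simp add: fun_eq_iff semiring_context_def right_mult_opt_mult_left left_mult_opt_mult)

lemma id_eq_semiring_context: "id = semiring_context (0, None, None)"
  by (simp add: fun_eq_iff semiring_context_def)

lemma all_semiring_context_iff:
  "(\<forall>p. P (semiring_context p)) \<longleftrightarrow>
     (\<forall>s u v. P (\<lambda>x. s + x) \<and> P (\<lambda>x. s + u * x) \<and>
        P (\<lambda>x. s + x * v) \<and> P (\<lambda>x. s + u * x * v))" (is "?L \<longleftrightarrow> ?R")
proof
  assume all: ?L
  show ?R
  proof (intro allI conjI)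
    fix s u v :: 'a
    show "P (\<lambda>x. s + x)"
      using all[rule_format, of "(s, None, None)"] by (simp add: semiring_context_def)
    show "P (\<lambda>x. s + u * x)"
      using all[rule_format, of "(s, Some u, None)"] by (simp add: semiring_context_def)
    show "P (\<lambda>x. s + x * v)"
      using all[rule_format, of "(s, None, Some v)"] by (simp add: semiring_context_def)
    show "P (\<lambda>x. s + u * x * v)"
      using all[rule_format, of "(s, Some u, Some v)"]
      by (simp add: semiring_context_def mult.assoc)
  qed
next
  assume all: ?R
  show ?L
  proof
    fix p :: "'a \<times> 'a option \<times> 'a option"
    obtain s u v where "p = (s, u, v)" by (metis prod.exhaust)
    then show "P (semiring_context p)"
      using all by (cases u; cases v) (simp_all add: semiring_context_def mult.assoc)
  qed
qed

lemma range_semiring_context_comp_closed: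
  assumes "c \<in> range semiring_context"
  shows "c \<circ> (\<lambda>x. x + e) \<in> range semiring_context"
    and "c \<circ> (\<lambda>x. x * e) \<in> range semiring_context"
    and "c \<circ> (\<lambda>x. e * x) \<in> range semiring_context"
proof -
  from assms obtain s u v where c: "c = semiring_context (s, u, v)"
    by (metis prod_cases3 rangeE)
  show "c \<circ> (\<lambda>x. x + e) \<in> range semiring_context"
    unfolding c semiring_context_comp_add_right by (rule rangeI)
  show "c \<circ> (\<lambda>x. x * e) \<in> range semiring_context"
    unfolding c semiring_context_comp_mult_right by (rule rangeI)
  show "c \<circ> (\<lambda>x. e * x) \<in> range semiring_context"
    unfolding c semiring_context_comp_mult_left by (rule rangeI)
qed

lemma semiring_congruence_context_kernel:
  fixes \<theta> :: "('a::semiring_0 \<times> 'a) set"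
  assumes "equiv UNIV \<theta>"
  shows "semiring_congruence (context_kernel (range semiring_context) \<theta>)"
    (is "semiring_congruence ?K")
proof -
  have equiv: "equiv UNIV ?K" using assms by (rule equiv_context_kernel)
  then have "trans ?K" by (rule equivE)
  have add: "(a + e, b + e) \<in> ?K" and mult_right: "(a * e, b * e) \<in> ?K"
    and mult_left: "(e * a, e * b) \<in> ?K" if "(a, b) \<in> ?K" for a b e
    using context_kernel_compatible[OF range_semiring_context_comp_closed(1) that]
      context_kernel_compatible[OF range_semiring_context_comp_closed(2) that]
      context_kernel_compatible[OF range_semiring_context_comp_closed(3) that]
    by simp_all
  have "(a + c, b + d) \<in> ?K \<and> (a * c, b * d) \<in> ?K"
    if ab: "(a, b) \<in> ?K" and cd: "(c, d) \<in> ?K" for a b c d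
  proof
    have "(b + c, b + d) \<in> ?K" using add[OF cd, of b] by (simp add: add.commute)
    with add[OF ab] show "(a + c, b + d) \<in> ?K" by (rule transD[OF \<open>trans ?K\<close>])
    from mult_right[OF ab] mult_left[OF cd] show "(a * c, b * d) \<in> ?K"
      by (rule transD[OF \<open>trans ?K\<close>])
  qed
  with equiv show ?thesis unfolding semiring_congruence_def by blast
qed

lemma open_context_kernel_semiring_context:
  fixes \<theta> :: "('a::{semiring_0, topological_space} \<times> 'a) set"
  assumes compact: "compact (UNIV :: 'a set)"
    and add: "continuous_on UNIV (\<lambda>p::'a \<times> 'a. fst p + snd p)"
    and mult: "continuous_on UNIV (\<lambda>p::'a \<times> 'a. fst p * snd p)"
    and "open \<theta>"
  shows "open (context_kernel (range semiring_context) \<theta>)"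
proof -
  define F :: "('a \<times> 'a) \<times> 'a \<times> 'a \<times> 'a \<Rightarrow> _" where
    "F = (\<lambda>((a, b), s, u, v). ((s + a, s + b), (s + u * a, s + u * b),
      (s + a * v, s + b * v), (s + u * a * v, s + u * b * v)))"
  have "compact (UNIV :: ('a \<times> 'a \<times> 'a) set)"
    using compact_Times[OF compact compact_Times[OF compact compact]] by simp
  moreover have "continuous_on UNIV F"
    unfolding F_def case_prod_beta
    by (intro continuous_on_Pair continuous_on_binop_compose[OF add]
        continuous_on_binop_compose[OF mult] continuous_intros)
  moreover have "open (\<theta> \<times> \<theta> \<times> \<theta> \<times> \<theta>)"
    using \<open>open \<theta>\<close> by (intro open_Times)
  ultimately have "open {q. \<forall>p. F (q, p) \<in> \<theta> \<times> \<theta> \<times> \<theta> \<times> \<theta>}"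
    by (rule open_Collect_all_compact)
  also have "{q. \<forall>p. F (q, p) \<in> \<theta> \<times> \<theta> \<times> \<theta> \<times> \<theta>} =
      context_kernel (range semiring_context) \<theta>"
  proof -
    have "(\<forall>p. F ((a, b), p) \<in> \<theta> \<times> \<theta> \<times> \<theta> \<times> \<theta>) \<longleftrightarrow>
        (a, b) \<in> context_kernel (range semiring_context) \<theta>" for a b
      using all_semiring_context_iff[where P = "\<lambda>c. (c a, c b) \<in> \<theta>"]
      by (simp add: F_def context_kernel_def)
    then show ?thesis by (simp add: set_eq_iff)
  qed
  finally show ?thesis .
qed

theorem lemma4p5:
  fixes \<theta> :: "('a::{semiring_0, t2_space} \<times> 'a) set"
  assumes "compact (UNIV :: 'a set)"
    and "continuous_on UNIV (\<lambda>p::'a \<times> 'a. fst p + snd p)"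
    and "continuous_on UNIV (\<lambda>p::'a \<times> 'a. fst p * snd p)"
    and "equiv UNIV \<theta>"
    and "open \<theta>"
  shows "\<exists>\<theta>0. semiring_congruence \<theta>0 \<and> open \<theta>0 \<and> \<theta>0 \<subseteq> \<theta>"
proof (intro exI conjI)
  show "semiring_congruence (context_kernel (range semiring_context) \<theta>)"
    using assms(4) by (rule semiring_congruence_context_kernel)
  show "open (context_kernel (range semiring_context) \<theta>)"
    using assms(1,2,3,5) by (rule open_context_kernel_semiring_context)
  show "context_kernel (range semiring_context) \<theta> \<subseteq> \<theta>"
    by (rule context_kernel_subset) (simp add: id_eq_semiring_context)
qed

end
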